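(* Let $L_B$ have the logistic density $\frac{\pi}{2}\operatorname{sech}^2(\pi u)$ on $\mathbb{R}$ and let $U_B$ be uniformly distributed on $[0,1]$, independent of $L_B$. Then for all integers $n\ge0$ and all $x\in\mathbb{R}$, \[ \mathbb{E}\left(x+iL_B-\tfrac12+U_B\right)^n=x^n . \] Likewise, let $L_E$ have the hyperbolic secant density $\operatorname{sech}(\pi u)$ on $\mathbb{R}$ and let $U_E$ be independent of $L_E$ with $\Pr\{U_E=0\}=\Pr\{U_E=1\}=\frac12$. Then for all integers $n\ge0$ and all $x\in\mathbb{R}$, \[ \mathbb{E}\left(x+iL_E-\tfrac12+U_E\right)^n=x^n . \]
   Context: $i=\sqrt{-1}$; $\mathbb{E}$ denotes expectation over all random variables appearing. *)

theory Defs
  imports "HOL-Probability.Probability"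
begin

definition sech :: "real \<Rightarrow> real" where
  "sech u = 1 / cosh u"

end

theory Submission
  imports Defs "HOL-Real_Asymp.Real_Asymp" "HOL-Computational_Algebra.Formal_Power_Series"
begin

text \<open>
  The theorem says \<open>\<bbbE>(x + \<i>L + V)^n = x^n\<close>; by the binomial theorem and
  independence this is equivalent to \<open>\<bbbE>(\<i>L + V)^k = 0\<close> for \<open>k > 0\<close>, i.e. to the statement that the
  exponential generating functions of the moments of \<open>\<i>L\<close> and of \<open>V\<close> are inverse power series.

  The proof works with real formal power series and proceeds as follows.
  (1) Power-series tools: uniqueness of coefficients, and a criterion turning an analytic identity
      \<open>M(t) g(t) = h(t)\<close> near \<open>0\<close>, with \<open>M\<close> the moment generating function of a density, into an
      identity of formal power series for the moment series (term-by-term integration).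
  (2) The moment generating functions: the substitution \<open>u = logit(s)/(2\<pi>)\<close> turns
      \<open>\<integral> e^(tu) sech(\<pi>u)^c du\<close> into a Beta integral, and Euler's reflection formula gives
      \<open>M(t) sin(t/2) = t/2\<close> (logistic) and \<open>M(t) cos(t/2) = 1\<close> (hyperbolic secant).
  (3) Twisting \<open>t \<mapsto> \<i>t\<close>: \<open>sin(\<i>t/2)\<close> and \<open>cos(\<i>t/2)\<close> are \<open>\<i>t/2\<close> times the moment series of the
      centred uniform law, resp. the moment series of the centred fair coin; this yields the two
      inverse-series identities.
  (4) Probability: moments of the given random variables, independence, and the binomial expansion.
\<close>

lemma powser_coeffs_eq_0:
  fixes a :: "nat \<Rightarrow> real"
  assumes d: "d > 0" and S: "\<And>t. \<bar>t\<bar> < d \<Longrightarrow> (\<lambda>n. a n * t ^ n) sums 0"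
  shows "a n = 0"
proof (induction n rule: less_induct)
  case (less n)
  have tail: "(\<lambda>k. a (k + n) * t ^ k) sums 0" if "t \<noteq> 0" "norm t < d" for t
  proof -
    have "(\<lambda>k. a (k + n) * t ^ (k + n)) sums (0 - (\<Sum>i<n. a i * t ^ i))"
      using sums_split_initial_segment[OF S[of t]] that by simp
    also have "(\<Sum>i<n. a i * t ^ i) = 0" using less by simp
    finally have "(\<lambda>k. a (k + n) * t ^ (k + n) / t ^ n) sums (0 / t ^ n)"
      by (intro sums_divide) simp
    moreover have "(\<lambda>k. a (k + n) * t ^ (k + n) / t ^ n) = (\<lambda>k. a (k + n) * t ^ k)"
      using that by (auto simp: power_add)
    ultimately show ?thesis by simp
  qed
  have "((\<lambda>x::real. 0) \<longlongrightarrow> a (0 + n)) (at 0)"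
    by (rule powser_limit_0_strong[OF d]) (use tail in auto)
  then show ?case using LIM_unique[OF _ tendsto_const] by fastforce
qed

lemma fps_mult_eq_of_sums:
  fixes F G H :: "real fps" and f g :: "real \<Rightarrow> real"
  assumes d: "d > 0"
    and F: "\<And>t. \<bar>t\<bar> < d \<Longrightarrow> (\<lambda>n. fps_nth F n * t ^ n) sums f t"
    and F_abs: "\<And>t. \<bar>t\<bar> < d \<Longrightarrow> summable (\<lambda>n. norm (fps_nth F n * t ^ n))"
    and G: "\<And>t. \<bar>t\<bar> < d \<Longrightarrow> (\<lambda>n. fps_nth G n * t ^ n) sums g t"
    and G_abs: "\<And>t. \<bar>t\<bar> < d \<Longrightarrow> summable (\<lambda>n. norm (fps_nth G n * t ^ n))"
    and H: "\<And>t. \<bar>t\<bar> < d \<Longrightarrow> (\<lambda>n. fps_nth H n * t ^ n) sums (f t * g t)"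
  shows "F * G = H"
proof (rule fps_ext)
  fix n
  have "(\<lambda>n. (fps_nth (F * G) n - fps_nth H n) * t ^ n) sums 0" if t: "\<bar>t\<bar> < d" for t
  proof -
    have "(\<lambda>k. \<Sum>i\<le>k. (fps_nth F i * t ^ i) * (fps_nth G (k - i) * t ^ (k - i))) sums
          ((\<Sum>k. fps_nth F k * t ^ k) * (\<Sum>k. fps_nth G k * t ^ k))"
      by (rule Cauchy_product_sums[OF F_abs[OF t] G_abs[OF t]])
    also have "(\<Sum>k. fps_nth F k * t ^ k) = f t" using F[OF t] by (rule sums_unique[symmetric])
    also have "(\<Sum>k. fps_nth G k * t ^ k) = g t" using G[OF t] by (rule sums_unique[symmetric])
    also have "(\<lambda>k. \<Sum>i\<le>k. (fps_nth F i * t ^ i) * (fps_nth G (k - i) * t ^ (k - i))) =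
               (\<lambda>k. fps_nth (F * G) k * t ^ k)"
    proof
      fix k
      have "(\<Sum>i\<le>k. (fps_nth F i * t ^ i) * (fps_nth G (k - i) * t ^ (k - i))) =
            (\<Sum>i\<le>k. (fps_nth F i * fps_nth G (k - i)) * t ^ k)"
        by (intro sum.cong refl) (simp add: power_add[symmetric])
      then show "(\<Sum>i\<le>k. (fps_nth F i * t ^ i) * (fps_nth G (k - i) * t ^ (k - i))) = fps_nth (F * G) k * t ^ k"
        by (simp add: fps_mult_nth atLeast0AtMost sum_distrib_right)
    qed
    finally have "(\<lambda>k. fps_nth (F * G) k * t ^ k) sums (f t * g t)" .
    from sums_diff[OF this H[OF t]] show ?thesis by (simp add: algebra_simps)
  qed
  from powser_coeffs_eq_0[OF d this, of n] show "fps_nth (F * G) n = fps_nth H n" by simp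
qed

definition egf :: "(nat \<Rightarrow> real) \<Rightarrow> real fps" where
  "egf m = Abs_fps (\<lambda>k. m k / fact k)"

definition dens_moment :: "(real \<Rightarrow> real) \<Rightarrow> nat \<Rightarrow> real" where
  "dens_moment f j = (\<integral>u. u ^ j * f u \<partial>lborel)"

lemma pow_div_fact_le_exp:
  fixes x :: real assumes "x \<ge> 0"
  shows "x ^ j / fact j \<le> exp x"
proof -
  have "(\<Sum>i\<in>{j}. x ^ i /\<^sub>R fact i) \<le> (\<Sum>i. x ^ i /\<^sub>R fact i)"
    by (rule sum_le_suminf) (use assms summable_exp in auto)
  then show ?thesis by (simp add: exp_def divide_inverse mult.commute)
qed

lemma abs_exp_partial_sum_le:
  fixes x :: real
  shows "\<bar>\<Sum>j<N. x ^ j / fact j\<bar> \<le> exp \<bar>x\<bar>"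
proof -
  have "\<bar>\<Sum>j<N. x ^ j / fact j\<bar> \<le> (\<Sum>j<N. \<bar>x\<bar> ^ j / fact j)"
    by (rule order_trans[OF sum_abs]) (simp add: abs_mult power_abs)
  also have "\<dots> \<le> (\<Sum>i. \<bar>x\<bar> ^ i /\<^sub>R fact i)"
    by (rule order_trans[OF _ sum_le_suminf[of _ "{..<N}"]])
       (use summable_exp in \<open>auto simp: divide_inverse mult.commute\<close>)
  finally show ?thesis by (simp add: exp_def)
qed

text \<open>Integrating the exponential series term by term against a density \<open>f\<close>, justified by
  dominated convergence with majorant \<open>exp \<bar>y u\<bar> * f u\<close>.\<close>
lemma exp_series_integral:
  fixes y f :: "real \<Rightarrow> real"
  assumes [measurable]: "y \<in> borel_measurable borel" "f \<in> borel_measurable borel"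
    and f_nonneg: "\<And>u. f u \<ge> 0"
    and int: "integrable lborel (\<lambda>u. exp \<bar>y u\<bar> * f u)"
  shows "\<And>j. integrable lborel (\<lambda>u. y u ^ j / fact j * f u)"
    and "(\<lambda>j. \<integral>u. y u ^ j / fact j * f u \<partial>lborel) sums (\<integral>u. exp (y u) * f u \<partial>lborel)"
proof -
  show term_int: "integrable lborel (\<lambda>u. y u ^ j / fact j * f u)" for j
  proof (rule Bochner_Integration.integrable_bound[OF int])
    show "AE u in lborel. norm (y u ^ j / fact j * f u) \<le> norm (exp \<bar>y u\<bar> * f u)"
    proof (intro AE_I2)
      fix u
      have "\<bar>y u\<bar> ^ j / fact j * f u \<le> exp \<bar>y u\<bar> * f u"
        using f_nonneg[of u] by (intro mult_right_mono pow_div_fact_le_exp) simp_all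
      then show "norm (y u ^ j / fact j * f u) \<le> norm (exp \<bar>y u\<bar> * f u)"
        using f_nonneg[of u] by (simp add: abs_mult power_abs)
    qed
  qed measurable
  define s where "s N u = (\<Sum>j<N. y u ^ j / fact j) * f u" for N u
  have [measurable]: "s N \<in> borel_measurable borel" for N
    unfolding s_def[abs_def] by measurable
  have "(\<lambda>N. integral\<^sup>L lborel (s N)) \<longlonglongrightarrow> (\<integral>u. exp (y u) * f u \<partial>lborel)"
  proof (rule integral_dominated_convergence[OF _ _ int])
    show "AE u in lborel. (\<lambda>N. s N u) \<longlonglongrightarrow> exp (y u) * f u"
    proof (intro AE_I2)
      fix u
      have "(\<lambda>j. y u ^ j / fact j) sums exp (y u)"
        using exp_converges[of "y u"] by (simp add: divide_inverse mult.commute)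
      then show "(\<lambda>N. s N u) \<longlonglongrightarrow> exp (y u) * f u"
        unfolding s_def sums_def by (intro tendsto_mult_right)
    qed
    show "AE u in lborel. norm (s N u) \<le> exp \<bar>y u\<bar> * f u" for N
      using abs_exp_partial_sum_le f_nonneg by (auto simp: s_def abs_mult mult_right_mono)
  qed auto
  moreover have "integral\<^sup>L lborel (s N) = (\<Sum>j<N. \<integral>u. y u ^ j / fact j * f u \<partial>lborel)" for N
    unfolding s_def sum_distrib_right using term_int by (subst Bochner_Integration.integral_sum) auto
  ultimately show "(\<lambda>j. \<integral>u. y u ^ j / fact j * f u \<partial>lborel) sums (\<integral>u. exp (y u) * f u \<partial>lborel)"
    unfolding sums_def by simp
qed

text \<open>A moment generating function finite on \<open>(-r, r)\<close> is also finite for \<open>exp \<bar>s u\<bar>\<close>, since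
  \<open>e^\<bar>x\<bar> \<le> e^x + e^(-x)\<close>; this majorant justifies all term-by-term integrations below.\<close>
lemma mgf_abs_integrable:
  fixes f :: "real \<Rightarrow> real"
  assumes [measurable]: "f \<in> borel_measurable borel" and f_nonneg: "\<And>u. f u \<ge> 0"
    and mgf: "\<And>t. \<bar>t\<bar> < r \<Longrightarrow> integrable lborel (\<lambda>u. exp (t * u) * f u)"
    and s: "\<bar>s\<bar> < r"
  shows "integrable lborel (\<lambda>u. exp \<bar>s * u\<bar> * f u)"
proof (rule Bochner_Integration.integrable_bound)
  show "integrable lborel (\<lambda>u. exp (s * u) * f u + exp ((- s) * u) * f u)"
    using mgf[of s] mgf[of "- s"] s by auto
  have "exp \<bar>s * u\<bar> * f u \<le> (exp (s * u) + exp ((- s) * u)) * f u" for u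
    using f_nonneg[of u] by (intro mult_right_mono) (auto simp: abs_if add_increasing add_increasing2)
  then show "AE u in lborel. norm (exp \<bar>s * u\<bar> * f u) \<le> norm (exp (s * u) * f u + exp ((- s) * u) * f u)"
    using f_nonneg by (intro AE_I2) (simp add: algebra_simps)
qed measurable

lemma mgf_moment_series:
  fixes f :: "real \<Rightarrow> real"
  assumes f_meas[measurable]: "f \<in> borel_measurable borel" and f_nonneg: "\<And>u. f u \<ge> 0"
    and r: "r > 0"
    and mgf: "\<And>t. \<bar>t\<bar> < r \<Longrightarrow> integrable lborel (\<lambda>u. exp (t * u) * f u)"
  shows "\<And>j. integrable lborel (\<lambda>u. u ^ j * f u)"
    and "\<And>t. \<bar>t\<bar> < r \<Longrightarrow> (\<lambda>j. fps_nth (egf (dens_moment f)) j * t ^ j) sums (\<integral>u. exp (t * u) * f u \<partial>lborel)"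
    and "\<And>t. \<bar>t\<bar> < r \<Longrightarrow> summable (\<lambda>j. norm (fps_nth (egf (dens_moment f)) j * t ^ j))"
proof -
  have abs_mgf: "integrable lborel (\<lambda>u. exp \<bar>s * u\<bar> * f u)" if "\<bar>s\<bar> < r" for s
    using f_meas f_nonneg mgf that by (rule mgf_abs_integrable)
  have scale: "(\<integral>u. (y * h u) ^ j / fact j * f u \<partial>lborel) = (y ^ j / fact j) * (\<integral>u. h u ^ j * f u \<partial>lborel)"
    for y j and h :: "real \<Rightarrow> real"
  proof -
    have "(\<lambda>u. (y * h u) ^ j / fact j * f u) = (\<lambda>u. (y ^ j / fact j) * (h u ^ j * f u))"
      by (auto simp: fun_eq_iff power_mult_distrib)
    then show ?thesis by simp
  qed
  show moment_int: "integrable lborel (\<lambda>u. u ^ j * f u)" for j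
  proof -
    have "integrable lborel (\<lambda>u. (fact j / (r/2) ^ j) * ((r/2 * u) ^ j / fact j * f u))"
      using exp_series_integral(1)[of "\<lambda>u. r/2 * u" f j] abs_mgf[of "r/2"] r f_nonneg
      by (intro integrable_mult_right) (auto simp: abs_of_pos)
    also have "(\<lambda>u. (fact j / (r/2) ^ j) * ((r/2 * u) ^ j / fact j * f u)) = (\<lambda>u. u ^ j * f u)"
      using r by (auto simp: fun_eq_iff power_mult_distrib field_simps)
    finally show ?thesis .
  qed
  show "(\<lambda>j. fps_nth (egf (dens_moment f)) j * t ^ j) sums (\<integral>u. exp (t * u) * f u \<partial>lborel)"
    if t: "\<bar>t\<bar> < r" for t
  proof -
    have "(\<lambda>j. \<integral>u. (t * u) ^ j / fact j * f u \<partial>lborel) sums (\<integral>u. exp (t * u) * f u \<partial>lborel)"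
      using abs_mgf[OF t] f_nonneg by (intro exp_series_integral(2)) auto
    then show ?thesis unfolding scale by (simp add: egf_def dens_moment_def mult_ac)
  qed
  show "summable (\<lambda>j. norm (fps_nth (egf (dens_moment f)) j * t ^ j))" if t: "\<bar>t\<bar> < r" for t
  proof (rule summable_comparison_test)
    have "(\<lambda>j. \<integral>u. (\<bar>t\<bar> * \<bar>u\<bar>) ^ j / fact j * f u \<partial>lborel) sums (\<integral>u. exp (\<bar>t\<bar> * \<bar>u\<bar>) * f u \<partial>lborel)"
      using exp_series_integral(2)[of "\<lambda>u. \<bar>t\<bar> * \<bar>u\<bar>" f] abs_mgf[OF t] f_nonneg
      by (simp add: abs_mult)
    then show "summable (\<lambda>j. \<integral>u. (\<bar>t\<bar> * \<bar>u\<bar>) ^ j / fact j * f u \<partial>lborel)"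
      by (rule sums_summable)
    show "\<exists>N. \<forall>j\<ge>N. norm (norm (fps_nth (egf (dens_moment f)) j * t ^ j)) \<le>
            (\<integral>u. (\<bar>t\<bar> * \<bar>u\<bar>) ^ j / fact j * f u \<partial>lborel)"
    proof (intro exI allI impI)
      fix j :: nat
      have "\<bar>\<integral>u. u ^ j * f u \<partial>lborel\<bar> \<le> (\<integral>u. \<bar>u\<bar> ^ j * f u \<partial>lborel)"
        using integral_norm_bound[of lborel "\<lambda>u. u ^ j * f u"] f_nonneg
        by (simp add: abs_mult power_abs)
      then have "(\<bar>t\<bar> ^ j / fact j) * \<bar>\<integral>u. u ^ j * f u \<partial>lborel\<bar> \<le>
                 (\<bar>t\<bar> ^ j / fact j) * (\<integral>u. \<bar>u\<bar> ^ j * f u \<partial>lborel)"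
        by (intro mult_left_mono) auto
      then show "norm (norm (fps_nth (egf (dens_moment f)) j * t ^ j)) \<le>
            (\<integral>u. (\<bar>t\<bar> * \<bar>u\<bar>) ^ j / fact j * f u \<partial>lborel)"
        unfolding scale by (simp add: egf_def dens_moment_def abs_mult power_abs mult.commute)
    qed
  qed
qed

lemma egf_moments_mult_eq:
  fixes f g :: "real \<Rightarrow> real" and G H :: "real fps"
  assumes [measurable]: "f \<in> borel_measurable borel" and f_nonneg: "\<And>u. f u \<ge> 0"
    and r: "r > 0"
    and mgf: "\<And>t. \<bar>t\<bar> < r \<Longrightarrow> integrable lborel (\<lambda>u. exp (t * u) * f u)"
    and G: "\<And>t. (\<lambda>n. fps_nth G n * t ^ n) sums g t"
    and G_abs: "\<And>t. summable (\<lambda>n. norm (fps_nth G n * t ^ n))"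
    and H: "\<And>t. \<bar>t\<bar> < r \<Longrightarrow> (\<lambda>n. fps_nth H n * t ^ n) sums ((\<integral>u. exp (t * u) * f u \<partial>lborel) * g t)"
  shows "egf (dens_moment f) * G = H"
  using mgf_moment_series(2,3)[OF _ f_nonneg r mgf] G G_abs H
  by (intro fps_mult_eq_of_sums[OF r]) auto

lemma logit_substitution:
  fixes h k :: "real \<Rightarrow> real"
  assumes h_cont: "\<And>u. isCont h u" and h_nonneg: "\<And>u. h u \<ge> 0"
    and hk: "\<And>s. 0 < s \<Longrightarrow> s < 1 \<Longrightarrow>
               h ((ln s - ln (1 - s)) / (2 * pi)) * ((1 / s + 1 / (1 - s)) / (2 * pi)) = k s"
    and k_int: "set_integrable lborel {0<..<1} k" and k_I: "(k has_integral I) {0<..<1}"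
  shows "integrable lborel h" and "integral\<^sup>L lborel h = I"
proof -
  define g where "g s = (ln s - ln (1 - s)) / (2 * pi)" for s :: real
  define g' where "g' s = (1 / s + 1 / (1 - s)) / (2 * pi)" for s :: real
  have e01: "einterval 0 1 = {0<..<(1::real)}"
    by (auto simp: einterval_def)
  have eq: "(\<lambda>s. indicator {0<..<1} s *\<^sub>R (h (g s) * g' s)) = (\<lambda>s. indicator {0<..<1} s *\<^sub>R k s)"
    using hk by (auto simp: fun_eq_iff g_def g'_def indicator_def)
  have hg_int: "set_integrable lborel (einterval 0 1) (\<lambda>s. h (g s) * g' s)"
    using k_int unfolding e01 set_integrable_def eq .
  have deriv: "DERIV g s :> g' s" if "0 < ereal s" "ereal s < 1" for s
    using that unfolding g_def g'_def by (auto intro!: derivative_eq_intros simp: field_simps)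
  have lim0: "((ereal \<circ> g \<circ> real_of_ereal) \<longlongrightarrow> -\<infinity>) (at_right 0)"
    unfolding zero_ereal_def ereal_tendsto_simps g_def by real_asymp
  have lim1: "((ereal \<circ> g \<circ> real_of_ereal) \<longlongrightarrow> \<infinity>) (at_left 1)"
    unfolding one_ereal_def ereal_tendsto_simps g_def by real_asymp
  have S: "set_integrable lborel (einterval (-\<infinity>) \<infinity>) h"
          "(LBINT u=-\<infinity>..\<infinity>. h u) = (LBINT s=0..1. h (g s) * g' s)"
    by (rule interval_integral_substitution_nonneg[OF _ deriv _ _ _ _ lim0 lim1 hg_int];
        auto simp: h_cont h_nonneg g'_def einterval_iff intro!: continuous_intros)+
  show "integrable lborel h" using S(1) by (simp add: set_integrable_def)
  have "(LBINT s=0..1. h (g s) * g' s) = (LBINT s : {0<..<1}. h (g s) * g' s)"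
    using interval_integral_Ioo[of 0 1] by (simp add: zero_ereal_def one_ereal_def)
  also have "\<dots> = (LBINT s : {0<..<1}. k s)"
    unfolding set_lebesgue_integral_def eq ..
  also have "\<dots> = integral {0<..<1} k"
    by (rule set_borel_integral_eq_integral(2)[OF k_int])
  also have "\<dots> = I" using k_I by (rule integral_unique)
  finally show "integral\<^sup>L lborel h = I"
    using S(2) by (simp add: interval_lebesgue_integral_def set_lebesgue_integral_def)
qed

lemma exp_logit:
  assumes "0 < s" "s < 1"
  shows "exp (t * ((ln s - ln (1 - s)) / (2 * pi))) = s powr (t / (2 * pi)) * (1 - s) powr (- (t / (2 * pi)))"
  using assms by (simp add: powr_def exp_add[symmetric] field_simps)

lemma sech_logit:
  assumes s: "0 < s" "s < 1"
  shows "sech (pi * ((ln s - ln (1 - s)) / (2 * pi))) = 2 * s powr (1/2) * (1 - s) powr (1/2)"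
proof -
  define P where "P = s powr (1/2)"
  define Q where "Q = (1 - s) powr (1/2)"
  have P: "P > 0" "P * P = s" using s by (auto simp: P_def powr_add[symmetric])
  have Q: "Q > 0" "Q * Q = 1 - s" using s by (auto simp: Q_def powr_add[symmetric])
  have "exp (pi * ((ln s - ln (1 - s)) / (2 * pi))) = P / Q"
    unfolding exp_logit[OF s] using s by (simp add: P_def Q_def powr_minus_divide)
  then have "cosh (pi * ((ln s - ln (1 - s)) / (2 * pi))) = (P / Q + Q / P) / 2"
    by (simp add: cosh_def exp_minus)
  also have "\<dots> = (P * P + Q * Q) / (2 * P * Q)"
    using P Q by (simp add: field_simps)
  also have "\<dots> = 1 / (2 * P * Q)"
    by (simp add: P Q)
  finally show ?thesis by (simp add: sech_def P_def Q_def)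
qed

lemma cosh_ne_0: "cosh (x::real) \<noteq> 0"
  using cosh_real_pos[of x] by linarith

lemma isCont_sech: "isCont sech x"
  unfolding sech_def[abs_def] by (intro continuous_intros) (simp add: cosh_ne_0)

text \<open>Moment generating function of \<open>sech (\<pi> u) ^ c\<close>: after the logit substitution it is a
  Beta integral, \<open>\<integral> e^(tu) sech(\<pi>u)^c du = 2^c/(2\<pi>) \<cdot> B(c/2 + t/(2\<pi>), c/2 - t/(2\<pi>))\<close>.\<close>
lemma mgf_sech_power:
  fixes t :: real and c :: nat
  assumes t: "\<bar>t\<bar> < c * pi"
  shows "integrable lborel (\<lambda>u. exp (t * u) * sech (pi * u) ^ c)"
    and "(\<integral>u. exp (t * u) * sech (pi * u) ^ c \<partial>lborel)
           = 2 ^ c / (2 * pi) * Beta (c / 2 + t / (2 * pi)) (c / 2 - t / (2 * pi))"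
proof -
  define a where "a = t / (2 * pi)"
  have a: "c / 2 + a > 0" "c / 2 - a > 0"
    using t pi_gt_zero unfolding a_def by (auto simp: field_simps abs_less_iff)
  define k where "k s = 2 ^ c / (2 * pi) * (s powr (c / 2 + a - 1) * (1 - s) powr (c / 2 - a - 1))"
    for s :: real
  have k_int: "set_integrable lborel {0<..<1} k"
    unfolding k_def
    by (intro set_integrable_mult_right set_integrable_subset[OF integrable_Beta[OF a]]) auto
  have k_I: "(k has_integral 2 ^ c / (2 * pi) * Beta (c / 2 + a) (c / 2 - a)) {0<..<1}"
    unfolding k_def using has_integral_Beta_real[OF a]
    by (intro has_integral_mult_right) (simp add: has_integral_Icc_iff_Ioo)
  have hk: "exp (t * ((ln s - ln (1 - s)) / (2 * pi))) * sech (pi * ((ln s - ln (1 - s)) / (2 * pi))) ^ c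
              * ((1 / s + 1 / (1 - s)) / (2 * pi)) = k s" if s: "0 < s" "s < 1" for s
  proof -
    have sech_pow: "sech (pi * ((ln s - ln (1 - s)) / (2 * pi))) ^ c = 2 ^ c * (s powr (c / 2) * (1 - s) powr (c / 2))"
      unfolding sech_logit[OF s] using s by (simp add: power_mult_distrib powr_power)
    have jac: "1 / s + 1 / (1 - s) = s powr (- 1) * (1 - s) powr (- 1)"
      using s by (simp add: powr_neg_one field_simps)
    have s_pow: "s powr a * s powr (c / 2) * s powr (- 1) = s powr (c / 2 + a - 1)"
      by (simp only: powr_add[symmetric]) (simp add: algebra_simps)
    have s'_pow: "(1 - s) powr (- a) * (1 - s) powr (c / 2) * (1 - s) powr (- 1) = (1 - s) powr (c / 2 - a - 1)"
      by (simp only: powr_add[symmetric]) (simp add: algebra_simps)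
    have "s powr a * (1 - s) powr (- a) * (2 ^ c * (s powr (c / 2) * (1 - s) powr (c / 2)))
            * (s powr (- 1) * (1 - s) powr (- 1) / (2 * pi))
          = 2 ^ c / (2 * pi) * ((s powr a * s powr (c / 2) * s powr (- 1))
              * ((1 - s) powr (- a) * (1 - s) powr (c / 2) * (1 - s) powr (- 1)))"
      by (simp add: field_simps)
    then show ?thesis
      unfolding exp_logit[OF s] sech_pow jac k_def a_def[symmetric] s_pow s'_pow .
  qed
  have h_cont: "isCont (\<lambda>u. exp (t * u) * sech (pi * u) ^ c) u" for u
    by (intro continuous_intros continuous_at_compose[OF _ isCont_sech, unfolded o_def])
  have h_nonneg: "exp (t * u) * sech (pi * u) ^ c \<ge> 0" for u
    by (simp add: sech_def)
  show "integrable lborel (\<lambda>u. exp (t * u) * sech (pi * u) ^ c)"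
    by (rule logit_substitution(1)[OF h_cont h_nonneg hk k_int k_I])
  show "(\<integral>u. exp (t * u) * sech (pi * u) ^ c \<partial>lborel)
          = 2 ^ c / (2 * pi) * Beta (c / 2 + t / (2 * pi)) (c / 2 - t / (2 * pi))"
    using logit_substitution(2)[OF h_cont h_nonneg hk k_int k_I] unfolding a_def .
qed

lemma Beta_reflection_real:
  fixes x :: real
  shows "Beta x (1 - x) = pi / sin (pi * x)"
proof -
  have "Gamma (complex_of_real x) * Gamma (complex_of_real (1 - x)) =
        complex_of_real pi / sin (complex_of_real (pi * x))"
    using Gamma_reflection_complex[of "complex_of_real x"] by simp
  then have "complex_of_real (Gamma x * Gamma (1 - x)) = complex_of_real (pi / sin (pi * x))"
    by (simp only: Gamma_complex_of_real sin_of_real of_real_mult of_real_divide)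
       (metis of_real_mult sin_of_real)
  then have "Gamma x * Gamma (1 - x) = pi / sin (pi * x)"
    by (simp only: of_real_eq_iff)
  then show ?thesis by (simp add: Beta_def)
qed

lemma logistic_mgf:
  fixes t :: real
  assumes t: "\<bar>t\<bar> < 2 * pi"
  shows "integrable lborel (\<lambda>u. exp (t * u) * (pi / 2 * (sech (pi * u))\<^sup>2))"
    and "(\<integral>u. exp (t * u) * (pi / 2 * (sech (pi * u))\<^sup>2) \<partial>lborel) * sin (t / 2) = t / 2"
proof -
  have t': "\<bar>t\<bar> < real 2 * pi" using t by simp
  have factor: "(\<lambda>u. exp (t * u) * (pi / 2 * (sech (pi * u))\<^sup>2)) = (\<lambda>u. pi / 2 * (exp (t * u) * sech (pi * u) ^ 2))"
    by (simp add: fun_eq_iff)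
  show "integrable lborel (\<lambda>u. exp (t * u) * (pi / 2 * (sech (pi * u))\<^sup>2))"
    unfolding factor using mgf_sech_power(1)[OF t'] by simp
  define a where "a = t / (2 * pi)"
  have mgf: "(\<integral>u. exp (t * u) * (pi / 2 * (sech (pi * u))\<^sup>2) \<partial>lborel) = Beta (1 + a) (1 - a)"
    unfolding factor integral_mult_right_zero mgf_sech_power(2)[OF t'] a_def by simp
  show "(\<integral>u. exp (t * u) * (pi / 2 * (sech (pi * u))\<^sup>2) \<partial>lborel) * sin (t / 2) = t / 2"
  proof (cases "a = 0")
    case False
    have a_lt: "\<bar>a\<bar> < 1" using t unfolding a_def by (simp add: field_simps)
    have "a \<notin> \<int>\<^sub>\<le>\<^sub>0"
      using False a_lt by (auto elim!: nonpos_Ints_cases')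
    have "Beta (1 + a) (1 - a) = Gamma (a + 1) * Gamma (1 - a)"
      by (simp add: Beta_def add.commute Gamma_numeral)
    also have "\<dots> = a * Beta a (1 - a)"
      using \<open>a \<notin> \<int>\<^sub>\<le>\<^sub>0\<close> by (simp add: Beta_def Gamma_plus1)
    also have "\<dots> = a * pi / sin (pi * a)" by (simp add: Beta_reflection_real)
    finally have B: "Beta (1 + a) (1 - a) = a * pi / sin (pi * a)" .
    have "sin (pi * a) \<noteq> 0"
      using False a_lt by (auto simp: sin_zero_iff_int2 abs_less_iff)
    moreover have "t / 2 = pi * a" by (simp add: a_def)
    ultimately show ?thesis unfolding mgf B by simp
  qed (simp add: a_def)
qed

lemma sech_mgf:
  fixes t :: real
  assumes t: "\<bar>t\<bar> < pi"
  shows "integrable lborel (\<lambda>u. exp (t * u) * sech (pi * u))"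
    and "(\<integral>u. exp (t * u) * sech (pi * u) \<partial>lborel) * cos (t / 2) = 1"
proof -
  have t': "\<bar>t\<bar> < real 1 * pi" using t by simp
  show "integrable lborel (\<lambda>u. exp (t * u) * sech (pi * u))"
    using mgf_sech_power(1)[OF t'] by simp
  define a where "a = t / (2 * pi)"
  have "(\<integral>u. exp (t * u) * sech (pi * u) \<partial>lborel) = Beta (1/2 + a) (1 - (1/2 + a)) / pi"
    using mgf_sech_power(2)[OF t'] unfolding a_def by (simp add: algebra_simps)
  also have "\<dots> = 1 / sin (pi * (1/2 + a))"
    using Beta_reflection_real[of "1/2 + a"] by simp
  also have "sin (pi * (1/2 + a)) = cos (t / 2)"
    by (simp add: a_def distrib_left sin_add)
  finally show "(\<integral>u. exp (t * u) * sech (pi * u) \<partial>lborel) * cos (t / 2) = 1"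
    using t by (simp add: cos_gt_zero_pi less_imp_neq[symmetric])
qed

text \<open>With \<open>z = \<i>\<close>
  this turns the moment series of \<open>L\<close> into that of \<open>\<i> L\<close>; with \<open>z = 1\<close> it is just the
  embedding of real into complex series.\<close>
definition fps_twist :: "complex \<Rightarrow> real fps \<Rightarrow> complex fps" where
  "fps_twist z F = Abs_fps (\<lambda>n. z ^ n * complex_of_real (fps_nth F n))"

lemma fps_twist_nth [simp]: "fps_nth (fps_twist z F) n = z ^ n * complex_of_real (fps_nth F n)"
  by (simp add: fps_twist_def)

lemma fps_twist_mult: "fps_twist z (F * G) = fps_twist z F * fps_twist z G"
proof (rule fps_ext)
  fix n
  have "fps_nth (fps_twist z F * fps_twist z G) n =
        (\<Sum>i=0..n. (z ^ i * of_real (fps_nth F i)) * (z ^ (n - i) * of_real (fps_nth G (n - i))))"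
    by (simp add: fps_mult_nth)
  also have "\<dots> = (\<Sum>i=0..n. z ^ n * of_real (fps_nth F i * fps_nth G (n - i)))"
  proof (intro sum.cong refl)
    fix i assume "i \<in> {0..n}"
    then have "z ^ i * z ^ (n - i) = z ^ n" by (simp add: power_add[symmetric])
    then show "(z ^ i * of_real (fps_nth F i)) * (z ^ (n - i) * of_real (fps_nth G (n - i))) =
               z ^ n * of_real (fps_nth F i * fps_nth G (n - i))"
      by (metis (no_types, lifting) mult.assoc mult.left_commute of_real_mult)
  qed
  also have "\<dots> = fps_nth (fps_twist z (F * G)) n"
    by (simp add: fps_mult_nth sum_distrib_left)
  finally show "fps_nth (fps_twist z (F * G)) n = fps_nth (fps_twist z F * fps_twist z G) n" ..
qed

text \<open>The coefficients of a product of twisted exponential generating functions are binomial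
  convolutions; this is how a series identity becomes an identity between moments.\<close>
lemma fps_twist_egf_mult_nth:
  "fps_nth (fps_twist \<i> (egf m) * fps_twist 1 (egf c)) k =
     (\<Sum>j\<le>k. of_nat (k choose j) * \<i> ^ j * complex_of_real (m j) * complex_of_real (c (k - j))) / fact k"
proof -
  have "fps_nth (fps_twist \<i> (egf m) * fps_twist 1 (egf c)) k =
        (\<Sum>j\<le>k. (\<i> ^ j * complex_of_real (m j / fact j)) * complex_of_real (c (k - j) / fact (k - j)))"
    by (simp add: fps_mult_nth atLeast0AtMost egf_def)
  also have "\<dots> = (\<Sum>j\<le>k. of_nat (k choose j) * \<i> ^ j * complex_of_real (m j) * complex_of_real (c (k - j)) / fact k)"
  proof (intro sum.cong refl)
    fix j assume "j \<in> {..k}"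
    then have "(of_nat (k choose j) :: complex) = fact k / (fact j * fact (k - j))"
      by (intro binomial_fact) auto
    then show "(\<i> ^ j * complex_of_real (m j / fact j)) * complex_of_real (c (k - j) / fact (k - j)) =
          of_nat (k choose j) * \<i> ^ j * complex_of_real (m j) * complex_of_real (c (k - j)) / fact k"
      by (simp add: field_simps)
  qed
  finally show ?thesis by (simp add: sum_divide_distrib)
qed

text \<open>Moments of the centred uniform distribution on \<open>[-1/2, 1/2]\<close> and of the centred fair coin
  taking the values \<open>\<plusminus>1/2\<close>.\<close>
definition uniform_moment :: "nat \<Rightarrow> real" where
  "uniform_moment k = ((1/2) ^ (k + 1) - (- 1/2) ^ (k + 1)) / (k + 1)"

definition coin_moment :: "nat \<Rightarrow> real" where
  "coin_moment k = ((1/2) ^ k + (- 1/2) ^ k) / 2"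

definition sin_half_fps :: "real fps" where
  "sin_half_fps = Abs_fps (\<lambda>n. sin_coeff n / 2 ^ n)"

definition cos_half_fps :: "real fps" where
  "cos_half_fps = Abs_fps (\<lambda>n. cos_coeff n / 2 ^ n)"

lemma sin_half_fps_sums: "(\<lambda>n. fps_nth sin_half_fps n * t ^ n) sums sin (t / 2)"
  and sin_half_fps_summable: "summable (\<lambda>n. norm (fps_nth sin_half_fps n * t ^ n))"
  using sin_converges[of "t / 2"] summable_norm_sin[of "t / 2"]
  by (simp_all add: sin_half_fps_def power_divide)

lemma cos_half_fps_sums: "(\<lambda>n. fps_nth cos_half_fps n * t ^ n) sums cos (t / 2)"
  and cos_half_fps_summable: "summable (\<lambda>n. norm (fps_nth cos_half_fps n * t ^ n))"
  using cos_converges[of "t / 2"] summable_norm_cos[of "t / 2"]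
  by (simp_all add: cos_half_fps_def power_divide)

lemma i_pow_sin_coeff: "\<i> ^ n * complex_of_real (sin_coeff n) = \<i> * complex_of_real ((1 - (- 1) ^ n) / (2 * fact n))"
proof (cases "even n")
  case False
  then obtain k where n: "n = 2 * k + 1" by (auto elim: oddE)
  have "\<i> ^ n * complex_of_real (sin_coeff n) = \<i> * ((- 1) ^ k * (- 1) ^ k) / fact n"
    by (simp add: n sin_coeff_def power_mult)
  also have "(- 1) ^ k * (- 1) ^ k = (1 :: complex)"
    by (simp add: power_mult_distrib[symmetric])
  finally show ?thesis using False by simp
qed (simp add: sin_coeff_def)

lemma i_pow_cos_coeff: "\<i> ^ n * complex_of_real (cos_coeff n) = complex_of_real ((1 + (- 1) ^ n) / (2 * fact n))"
proof (cases "even n")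
  case True
  then obtain k where n: "n = 2 * k" by (auto elim: evenE)
  have "\<i> ^ n * complex_of_real (cos_coeff n) = (- 1) ^ k * (- 1) ^ k / fact n"
    by (simp add: n cos_coeff_def power_mult)
  also have "(- 1) ^ k * (- 1) ^ k = (1 :: complex)"
    by (simp add: power_mult_distrib[symmetric])
  finally show ?thesis using True by simp
qed (simp add: cos_coeff_def)

text \<open>\<open>sin (\<i> t/2) = \<i> sinh (t/2) = (\<i> t/2) \<cdot> \<bbbE> e^(t V)\<close> for \<open>V\<close> uniform on \<open>[-1/2, 1/2]\<close>.\<close>
lemma fps_twist_sin_half:
  "fps_twist \<i> sin_half_fps = fps_const (\<i> / 2) * fps_X * fps_twist 1 (egf uniform_moment)"
proof (rule fps_ext)
  fix n
  show "fps_nth (fps_twist \<i> sin_half_fps) n =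
        fps_nth (fps_const (\<i> / 2) * fps_X * fps_twist 1 (egf uniform_moment)) n"
  proof (cases n)
    case (Suc m)
    have "fps_nth (fps_twist \<i> sin_half_fps) n = \<i> ^ n * complex_of_real (sin_coeff n) / 2 ^ n"
      by (simp add: sin_half_fps_def)
    also have "\<dots> = \<i> / 2 * complex_of_real ((1/2) ^ n * (1 - (- 1) ^ n) / fact n)"
      unfolding i_pow_sin_coeff by (simp add: field_simps)
    also have "(1/2) ^ n * (1 - (- 1) ^ n) / fact n = uniform_moment m / fact m"
      by (simp add: Suc uniform_moment_def power_minus' field_simps)
    finally show ?thesis
      by (simp add: Suc egf_def mult.assoc)
  qed (simp add: sin_half_fps_def sin_coeff_def)
qed

text \<open>\<open>cos (\<i> t/2) = cosh (t/2) = \<bbbE> e^(t V)\<close> for the centred fair coin \<open>V = \<plusminus>1/2\<close>.\<close>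
lemma fps_twist_cos_half: "fps_twist \<i> cos_half_fps = fps_twist 1 (egf coin_moment)"
proof (rule fps_ext)
  fix n
  have "fps_nth (fps_twist \<i> cos_half_fps) n = complex_of_real ((1 + (- 1) ^ n) / (2 * fact n)) / 2 ^ n"
    by (simp add: cos_half_fps_def i_pow_cos_coeff)
  also have "\<dots> = complex_of_real (coin_moment n / fact n)"
    by (simp add: coin_moment_def power_minus' field_simps)
  finally show "fps_nth (fps_twist \<i> cos_half_fps) n = fps_nth (fps_twist 1 (egf coin_moment)) n"
    by (simp add: egf_def)
qed

lemma sech_measurable [measurable]: "sech \<in> borel_measurable borel"
  using isCont_sech by (intro borel_measurable_continuous_onI continuous_at_imp_continuous_on) auto

text \<open>Analytic heart of the first statement: \<open>M\<^sub>L(t) sin(t/2) = t/2\<close> for the logistic \<open>L\<close>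
  gives, after twisting \<open>t \<mapsto> \<i> t\<close>, that the exponential generating functions of the moments of
  \<open>\<i> L\<close> and of a centred uniform \<open>V\<close> are mutually inverse.\<close>
lemma logistic_uniform_egf:
  "fps_twist \<i> (egf (dens_moment (\<lambda>u. pi / 2 * (sech (pi * u))\<^sup>2))) * fps_twist 1 (egf uniform_moment) = 1"
proof -
  define A where "A = egf (dens_moment (\<lambda>u. pi / 2 * (sech (pi * u))\<^sup>2))"
  define H :: "real fps" where "H = fps_const (1/2) * fps_X"
  have "A * sin_half_fps = H"
    unfolding A_def
  proof (rule egf_moments_mult_eq[OF _ _ pi_gt_zero _ sin_half_fps_sums sin_half_fps_summable])
    show "integrable lborel (\<lambda>u. exp (t * u) * (pi / 2 * (sech (pi * u))\<^sup>2))" if "\<bar>t\<bar> < pi" for t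
      using logistic_mgf(1)[of t] that pi_gt_zero by simp
    show "(\<lambda>n. fps_nth H n * t ^ n) sums
            ((\<integral>u. exp (t * u) * (pi / 2 * (sech (pi * u))\<^sup>2) \<partial>lborel) * sin (t / 2))"
      if "\<bar>t\<bar> < pi" for t
    proof -
      have "(\<lambda>n. if n = 1 then t ^ n / 2 else 0) sums (t ^ 1 / 2)" by (rule sums_single)
      moreover have "(\<lambda>n. fps_nth H n * t ^ n) = (\<lambda>n. if n = 1 then t ^ n / 2 else 0)"
        by (auto simp: H_def fun_eq_iff)
      ultimately show ?thesis
        using logistic_mgf(2)[of t] that pi_gt_zero by simp
    qed
  qed auto
  then have "fps_twist \<i> A * fps_twist \<i> sin_half_fps = fps_twist \<i> H"
    by (metis fps_twist_mult)
  moreover have "fps_twist \<i> H = fps_const (\<i> / 2) * fps_X"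
    by (rule fps_ext) (simp add: H_def le_Suc_eq)
  ultimately have "(fps_const (\<i> / 2) * fps_X) * (fps_twist \<i> A * fps_twist 1 (egf uniform_moment)) =
                   (fps_const (\<i> / 2) * fps_X) * 1"
    unfolding fps_twist_sin_half by (simp add: ac_simps)
  then show ?thesis
    unfolding A_def by (subst (asm) mult_cancel_left) auto
qed

text \<open>Likewise \<open>M\<^sub>L(t) cos(t/2) = 1\<close> for the hyperbolic secant law makes the moment series of
  \<open>\<i> L\<close> inverse to that of the centred fair coin.\<close>
lemma sech_coin_egf:
  "fps_twist \<i> (egf (dens_moment (\<lambda>u. sech (pi * u)))) * fps_twist 1 (egf coin_moment) = 1"
proof -
  define A where "A = egf (dens_moment (\<lambda>u. sech (pi * u)))"
  have "A * cos_half_fps = 1"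
    unfolding A_def
  proof (rule egf_moments_mult_eq[OF _ _ pi_gt_zero _ cos_half_fps_sums cos_half_fps_summable])
    show "integrable lborel (\<lambda>u. exp (t * u) * sech (pi * u))" if "\<bar>t\<bar> < pi" for t
      using sech_mgf(1) that by simp
    show "(\<lambda>n. fps_nth 1 n * t ^ n) sums ((\<integral>u. exp (t * u) * sech (pi * u) \<partial>lborel) * cos (t / 2))"
      if "\<bar>t\<bar> < pi" for t
    proof -
      have "(\<lambda>n. if n = 0 then t ^ n else 0) sums (t ^ 0)" by (rule sums_single)
      moreover have "(\<lambda>n. fps_nth 1 n * t ^ n) = (\<lambda>n. if n = 0 then t ^ n else 0)"
        by (auto simp: fun_eq_iff)
      ultimately show ?thesis
        using sech_mgf(2) that by simp
    qed
    show "(\<lambda>u. sech (pi * u)) \<in> borel_measurable borel" by measurable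
    show "sech (pi * u) \<ge> 0" for u by (simp add: sech_def)
  qed
  then have "fps_twist \<i> A * fps_twist \<i> cos_half_fps = fps_twist \<i> 1"
    by (metis fps_twist_mult)
  moreover have "fps_twist \<i> 1 = 1"
    by (rule fps_ext) simp
  ultimately show ?thesis
    unfolding A_def fps_twist_cos_half by simp
qed

lemma distributed_expectation:
  fixes X :: "'a \<Rightarrow> real" and f g :: "real \<Rightarrow> real"
  assumes X: "distributed M lborel X (\<lambda>u. ennreal (f u))" and f_nonneg: "\<And>u. f u \<ge> 0"
    and g: "g \<in> borel_measurable borel" and int: "integrable lborel (\<lambda>u. g u * f u)"
  shows "integrable M (\<lambda>\<omega>. g (X \<omega>))" and "(\<integral>\<omega>. g (X \<omega>) \<partial>M) = (\<integral>u. g u * f u \<partial>lborel)"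
  using distributed_integrable[OF X, of g] distributed_integral[OF X, of g] f_nonneg g int
  by (simp_all add: mult.commute)

lemma uniform_moment_integral:
  "integrable lborel (\<lambda>v. (v - 1/2) ^ r * indicator {0..1} v :: real)"
  "(\<integral>v. (v - 1/2) ^ r * indicator {0..1} v \<partial>lborel) = uniform_moment r"
proof -
  show "integrable lborel (\<lambda>v. (v - 1/2) ^ r * indicator {0..1} v :: real)"
    by (intro borel_integrable_atLeastAtMost continuous_intros)
  define F where "F v = (v - 1/2) ^ (r + 1) / (r + 1)" for v :: real
  have pow_Suc: "y ^ r + real r * y ^ (r - Suc 0) * y = (1 + real r) * y ^ r" for y :: real
    by (cases r) (auto simp: algebra_simps)
  have "((\<lambda>v. (v - 1/2) ^ (r + 1) / (r + 1)) has_real_derivative (x - 1/2) ^ r) (at x within {0..1})"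
    for x :: real
    by (auto intro!: derivative_eq_intros simp: pow_Suc)
  then have "(\<integral>v. indicator {0..1} v *\<^sub>R (v - 1/2) ^ r \<partial>lborel) = F 1 - F 0"
    unfolding F_def
    by (intro integral_FTC_atLeastAtMost)
       (auto simp: has_real_derivative_iff_has_vector_derivative intro!: continuous_intros)
  also have "F 1 - F 0 = uniform_moment r"
  proof -
    have "(1::real) - 1/2 = 1/2" "(0::real) - 1/2 = - 1/2" by simp_all
    then show ?thesis unfolding F_def uniform_moment_def diff_divide_distrib by (simp add: add.commute)
  qed
  finally show "(\<integral>v. (v - 1/2) ^ r * indicator {0..1} v \<partial>lborel) = uniform_moment r"
    by (simp add: mult.commute)
qed

lemma fair_coin_expectation:
  fixes U :: "'a \<Rightarrow> real" and g :: "real \<Rightarrow> real"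
  assumes "prob_space M" and U[measurable]: "U \<in> borel_measurable M" and g[measurable]: "g \<in> borel_measurable borel"
    and U0: "measure M {\<omega> \<in> space M. U \<omega> = 0} = 1/2"
    and U1: "measure M {\<omega> \<in> space M. U \<omega> = 1} = 1/2"
  shows "integrable M (\<lambda>\<omega>. g (U \<omega>))" and "(\<integral>\<omega>. g (U \<omega>) \<partial>M) = (g 0 + g 1) / 2"
proof -
  interpret prob_space M by fact
  define A0 where "A0 = {\<omega> \<in> space M. U \<omega> = 0}"
  define A1 where "A1 = {\<omega> \<in> space M. U \<omega> = 1}"
  have [measurable]: "A0 \<in> sets M" "A1 \<in> sets M" unfolding A0_def A1_def by measurable
  have "prob (A0 \<union> A1) = prob A0 + prob A1"
    by (rule finite_measure_Union) (auto simp: A0_def A1_def)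
  then have "prob (A0 \<union> A1) = 1" using U0 U1 unfolding A0_def A1_def by simp
  then have "AE \<omega> in M. \<omega> \<in> A0 \<union> A1" by (rule AE_prob_1)
  then have simple: "AE \<omega> in M. g (U \<omega>) = indicator A0 \<omega> * g 0 + indicator A1 \<omega> * g 1"
    by eventually_elim (auto simp: A0_def A1_def)
  have simple_int: "integrable M (\<lambda>\<omega>. indicator A0 \<omega> * g 0 + indicator A1 \<omega> * g 1)"
    by (intro Bochner_Integration.integrable_add integrable_mult_left integrable_real_indicator)
       (simp_all add: less_top[symmetric])
  show "integrable M (\<lambda>\<omega>. g (U \<omega>))"
    using integrable_cong_AE[OF _ _ simple] simple_int by simp
  have "(\<integral>\<omega>. g (U \<omega>) \<partial>M) = (\<integral>\<omega>. indicator A0 \<omega> * g 0 + indicator A1 \<omega> * g 1 \<partial>M)"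
    using simple by (intro integral_cong_AE) simp_all
  also have "\<dots> = prob A0 * g 0 + prob A1 * g 1"
    by (simp add: less_top[symmetric])
  finally show "(\<integral>\<omega>. g (U \<omega>) \<partial>M) = (g 0 + g 1) / 2"
    using U0 U1 unfolding A0_def A1_def by (simp add: field_simps)
qed

lemma indep_complex_moments:
  fixes L V :: "'a \<Rightarrow> real"
  assumes "prob_space M" and ind: "prob_space.indep_var M borel L borel V"
    and L_int: "\<And>j. integrable M (\<lambda>\<omega>. L \<omega> ^ j)" and V_int: "\<And>r. integrable M (\<lambda>\<omega>. V \<omega> ^ r)"
  shows "integrable M (\<lambda>\<omega>. (\<i> * complex_of_real (L \<omega>) + complex_of_real (V \<omega>)) ^ k)"
    and "(\<integral>\<omega>. (\<i> * complex_of_real (L \<omega>) + complex_of_real (V \<omega>)) ^ k \<partial>M) =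
           (\<Sum>j\<le>k. of_nat (k choose j) * \<i> ^ j * complex_of_real (\<integral>\<omega>. L \<omega> ^ j \<partial>M)
                      * complex_of_real (\<integral>\<omega>. V \<omega> ^ (k - j) \<partial>M))"
proof -
  interpret prob_space M by fact
  define T where "T j r \<omega> = complex_of_real (L \<omega> ^ j) * complex_of_real (V \<omega> ^ r)" for j r \<omega>
  have ind_pow: "indep_var borel (\<lambda>\<omega>. complex_of_real (L \<omega> ^ j)) borel (\<lambda>\<omega>. complex_of_real (V \<omega> ^ r))" for j r
    using indep_var_compose[OF ind, of "\<lambda>l. complex_of_real (l ^ j)" borel "\<lambda>v. complex_of_real (v ^ r)" borel]
    by (simp add: comp_def)
  have L_int': "integrable M (\<lambda>\<omega>. complex_of_real (L \<omega> ^ j))" for j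
    by (rule integrable_of_real[OF L_int])
  have V_int': "integrable M (\<lambda>\<omega>. complex_of_real (V \<omega> ^ r))" for r
    by (rule integrable_of_real[OF V_int])
  have T_int: "integrable M (T j r)" for j r
    unfolding T_def[abs_def] by (rule indep_var_integrable[OF ind_pow L_int' V_int'])
  have T_val: "(\<integral>\<omega>. T j r \<omega> \<partial>M) = complex_of_real (\<integral>\<omega>. L \<omega> ^ j \<partial>M) * complex_of_real (\<integral>\<omega>. V \<omega> ^ r \<partial>M)"
    for j r
    unfolding T_def[abs_def] indep_var_lebesgue_integral[OF ind_pow L_int' V_int'] integral_complex_of_real ..
  have binomial: "(\<i> * complex_of_real (L \<omega>) + complex_of_real (V \<omega>)) ^ k =
                  (\<Sum>j\<le>k. of_nat (k choose j) * \<i> ^ j * T j (k - j) \<omega>)" for \<omega>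
    unfolding binomial_ring T_def by (simp add: power_mult_distrib mult.assoc)
  show "integrable M (\<lambda>\<omega>. (\<i> * complex_of_real (L \<omega>) + complex_of_real (V \<omega>)) ^ k)"
    unfolding binomial using T_int by (intro Bochner_Integration.integrable_sum integrable_mult_right) auto
  show "(\<integral>\<omega>. (\<i> * complex_of_real (L \<omega>) + complex_of_real (V \<omega>)) ^ k \<partial>M) =
           (\<Sum>j\<le>k. of_nat (k choose j) * \<i> ^ j * complex_of_real (\<integral>\<omega>. L \<omega> ^ j \<partial>M)
                      * complex_of_real (\<integral>\<omega>. V \<omega> ^ (k - j) \<partial>M))"
    unfolding binomial using T_int by (subst Bochner_Integration.integral_sum) (auto simp: T_val mult.assoc)
qed

lemma shifted_power_expectation:
  fixes L U :: "'a \<Rightarrow> real" and x :: real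
  assumes "prob_space M" and ind: "prob_space.indep_var M borel L borel U"
    and L_int: "\<And>j. integrable M (\<lambda>\<omega>. L \<omega> ^ j)" and V_int: "\<And>r. integrable M (\<lambda>\<omega>. (U \<omega> - 1/2) ^ r)"
    and egf_inverse: "fps_twist \<i> (egf (\<lambda>j. \<integral>\<omega>. L \<omega> ^ j \<partial>M)) *
                      fps_twist 1 (egf (\<lambda>r. \<integral>\<omega>. (U \<omega> - 1/2) ^ r \<partial>M)) = 1"
  shows "integrable M (\<lambda>\<omega>. (complex_of_real x + \<i> * complex_of_real (L \<omega>) - 1/2 + complex_of_real (U \<omega>)) ^ n) \<and>
         (\<integral>\<omega>. (complex_of_real x + \<i> * complex_of_real (L \<omega>) - 1/2 + complex_of_real (U \<omega>)) ^ n \<partial>M)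
           = complex_of_real (x ^ n)"
proof -
  interpret prob_space M by fact
  define Y where "Y \<omega> = \<i> * complex_of_real (L \<omega>) + complex_of_real (U \<omega> - 1/2)" for \<omega>
  have "indep_var borel L borel (\<lambda>\<omega>. U \<omega> - 1/2)"
    using indep_var_compose[OF ind, of id borel "\<lambda>u. u - 1/2" borel] by (simp add: comp_def)
  note Y_moments = indep_complex_moments[OF \<open>prob_space M\<close> this L_int V_int]
  have Y_int: "integrable M (\<lambda>\<omega>. Y \<omega> ^ k)" for k
    using Y_moments(1) by (simp add: Y_def)
  have Y_val: "(\<integral>\<omega>. Y \<omega> ^ k \<partial>M) = (if k = 0 then 1 else 0)" for k
  proof -
    have "fps_nth 1 k = (\<integral>\<omega>. Y \<omega> ^ k \<partial>M) / fact k"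
      using Y_moments(2)[of k] unfolding egf_inverse[symmetric] fps_twist_egf_mult_nth
      by (simp add: Y_def)
    then show ?thesis by (simp split: if_splits)
  qed
  have expand: "(complex_of_real x + \<i> * complex_of_real (L \<omega>) - 1/2 + complex_of_real (U \<omega>)) ^ n =
        (\<Sum>k\<le>n. of_nat (n choose k) * complex_of_real x ^ (n - k) * Y \<omega> ^ k)" for \<omega>
  proof -
    have "complex_of_real x + \<i> * complex_of_real (L \<omega>) - 1/2 + complex_of_real (U \<omega>) = Y \<omega> + complex_of_real x"
      by (simp add: Y_def)
    then show ?thesis by (simp only: binomial_ring mult_ac)
  qed
  have "(\<integral>\<omega>. (complex_of_real x + \<i> * complex_of_real (L \<omega>) - 1/2 + complex_of_real (U \<omega>)) ^ n \<partial>M) =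
        (\<Sum>k\<le>n. of_nat (n choose k) * complex_of_real x ^ (n - k) * (\<integral>\<omega>. Y \<omega> ^ k \<partial>M))"
    unfolding expand using Y_int by (subst Bochner_Integration.integral_sum) auto
  also have "\<dots> = complex_of_real (x ^ n)"
    by (simp add: Y_val if_distrib sum.delta cong: if_cong)
  finally show ?thesis
    unfolding expand using Y_int by (auto intro!: Bochner_Integration.integrable_sum integrable_mult_right)
qed

lemma logistic_uniform_case:
  fixes L U :: "'a \<Rightarrow> real" and x :: real
  assumes "prob_space M"
    and L: "distributed M lborel L (\<lambda>u. ennreal (pi / 2 * (sech (pi * u))\<^sup>2))"
    and U: "distributed M lborel U (\<lambda>v. indicator {0..1} v)"
    and ind: "prob_space.indep_var M borel L borel U"
  shows "integrable M (\<lambda>\<omega>. (complex_of_real x + \<i> * complex_of_real (L \<omega>) - 1/2 + complex_of_real (U \<omega>)) ^ n) \<and>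
         (\<integral>\<omega>. (complex_of_real x + \<i> * complex_of_real (L \<omega>) - 1/2 + complex_of_real (U \<omega>)) ^ n \<partial>M)
           = complex_of_real (x ^ n)"
proof -
  define f where "f u = pi / 2 * (sech (pi * u))\<^sup>2" for u
  have [measurable]: "f \<in> borel_measurable borel" unfolding f_def by measurable
  have f_nonneg: "f u \<ge> 0" for u unfolding f_def by simp
  have f_moments: "integrable lborel (\<lambda>u. u ^ j * f u)" for j
  proof (rule mgf_moment_series(1)[OF _ f_nonneg pi_gt_zero])
    show "integrable lborel (\<lambda>u. exp (t * u) * f u)" if "\<bar>t\<bar> < pi" for t
      using logistic_mgf(1)[of t] that pi_gt_zero by (simp add: f_def)
  qed measurable
  note L_moments = distributed_expectation[OF L[folded f_def] f_nonneg _ f_moments]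
  have U': "distributed M lborel U (\<lambda>v. ennreal (indicator {0..1} v))"
    using U by (simp add: ennreal_indicator)
  note V_moments = distributed_expectation[OF U' _ _ uniform_moment_integral(1)]
  show ?thesis
  proof (rule shifted_power_expectation[OF \<open>prob_space M\<close> ind])
    show "integrable M (\<lambda>\<omega>. L \<omega> ^ j)" "integrable M (\<lambda>\<omega>. (U \<omega> - 1/2) ^ r)" for j r
      using L_moments(1) V_moments(1) by auto
    have "(\<lambda>j. \<integral>\<omega>. L \<omega> ^ j \<partial>M) = dens_moment f"
      using L_moments(2) by (auto simp: dens_moment_def)
    moreover have "(\<lambda>r. \<integral>\<omega>. (U \<omega> - 1/2) ^ r \<partial>M) = uniform_moment"
      using V_moments(2) uniform_moment_integral(2) by auto
    ultimately show "fps_twist \<i> (egf (\<lambda>j. \<integral>\<omega>. L \<omega> ^ j \<partial>M)) *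
                     fps_twist 1 (egf (\<lambda>r. \<integral>\<omega>. (U \<omega> - 1/2) ^ r \<partial>M)) = 1"
      using logistic_uniform_egf unfolding f_def[abs_def] by simp
  qed
qed

lemma sech_coin_case:
  fixes L U :: "'a \<Rightarrow> real" and x :: real
  assumes "prob_space M"
    and L: "distributed M lborel L (\<lambda>u. ennreal (sech (pi * u)))"
    and [measurable]: "U \<in> borel_measurable M"
    and U0: "measure M {\<omega> \<in> space M. U \<omega> = 0} = 1/2"
    and U1: "measure M {\<omega> \<in> space M. U \<omega> = 1} = 1/2"
    and ind: "prob_space.indep_var M borel L borel U"
  shows "integrable M (\<lambda>\<omega>. (complex_of_real x + \<i> * complex_of_real (L \<omega>) - 1/2 + complex_of_real (U \<omega>)) ^ n) \<and>
         (\<integral>\<omega>. (complex_of_real x + \<i> * complex_of_real (L \<omega>) - 1/2 + complex_of_real (U \<omega>)) ^ n \<partial>M)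
           = complex_of_real (x ^ n)"
proof -
  define f where "f u = sech (pi * u)" for u
  have [measurable]: "f \<in> borel_measurable borel" unfolding f_def by measurable
  have f_nonneg: "f u \<ge> 0" for u unfolding f_def sech_def by simp
  have f_moments: "integrable lborel (\<lambda>u. u ^ j * f u)" for j
  proof (rule mgf_moment_series(1)[OF _ f_nonneg pi_gt_zero])
    show "integrable lborel (\<lambda>u. exp (t * u) * f u)" if "\<bar>t\<bar> < pi" for t
      using sech_mgf(1)[OF that] by (simp add: f_def)
  qed measurable
  note L_moments = distributed_expectation[OF L[folded f_def] f_nonneg _ f_moments]
  have [measurable]: "(\<lambda>v::real. (v - 1/2) ^ r) \<in> borel_measurable borel" for r by measurable
  note V_moments = fair_coin_expectation[OF \<open>prob_space M\<close> _ this U0 U1]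
  show ?thesis
  proof (rule shifted_power_expectation[OF \<open>prob_space M\<close> ind])
    show "integrable M (\<lambda>\<omega>. L \<omega> ^ j)" "integrable M (\<lambda>\<omega>. (U \<omega> - 1/2) ^ r)" for j r
      using L_moments(1) V_moments(1) by auto
    have "(\<lambda>j. \<integral>\<omega>. L \<omega> ^ j \<partial>M) = dens_moment f"
      using L_moments(2) by (auto simp: dens_moment_def)
    moreover have "(\<lambda>r. \<integral>\<omega>. (U \<omega> - 1/2) ^ r \<partial>M) = coin_moment"
      using V_moments(2) by (simp add: fun_eq_iff coin_moment_def add.commute)
    ultimately show "fps_twist \<i> (egf (\<lambda>j. \<integral>\<omega>. L \<omega> ^ j \<partial>M)) *
                     fps_twist 1 (egf (\<lambda>r. \<integral>\<omega>. (U \<omega> - 1/2) ^ r \<partial>M)) = 1"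
      using sech_coin_egf unfolding f_def[abs_def] by simp
  qed
qed

theorem mainTheorem2:
  shows "(\<forall>(M :: 'a measure) L U (n :: nat) (x :: real).
            prob_space M \<longrightarrow>
            distributed M lborel L (\<lambda>u. ennreal (pi / 2 * (sech (pi * u))\<^sup>2)) \<longrightarrow>
            distributed M lborel U (\<lambda>v. indicator {0..1} v) \<longrightarrow>
            prob_space.indep_var M borel L borel U \<longrightarrow>
              integrable M (\<lambda>\<omega>. (complex_of_real x + \<i> * complex_of_real (L \<omega>) - 1/2
                                   + complex_of_real (U \<omega>)) ^ n) \<and>
              (\<integral>\<omega>. (complex_of_real x + \<i> * complex_of_real (L \<omega>) - 1/2
                      + complex_of_real (U \<omega>)) ^ n \<partial>M) = complex_of_real (x ^ n))
       \<and>
         (\<forall>(M :: 'b measure) L U (n :: nat) (x :: real).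
            prob_space M \<longrightarrow>
            distributed M lborel L (\<lambda>u. ennreal (sech (pi * u))) \<longrightarrow>
            U \<in> borel_measurable M \<longrightarrow>
            measure M {\<omega> \<in> space M. U \<omega> = 0} = 1/2 \<longrightarrow>
            measure M {\<omega> \<in> space M. U \<omega> = 1} = 1/2 \<longrightarrow>
            prob_space.indep_var M borel L borel U \<longrightarrow>
              integrable M (\<lambda>\<omega>. (complex_of_real x + \<i> * complex_of_real (L \<omega>) - 1/2
                                   + complex_of_real (U \<omega>)) ^ n) \<and>
              (\<integral>\<omega>. (complex_of_real x + \<i> * complex_of_real (L \<omega>) - 1/2
                      + complex_of_real (U \<omega>)) ^ n \<partial>M) = complex_of_real (x ^ n))"
  using logistic_uniform_case sech_coin_case by blast

end
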